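(* Let $X\in\mathbb{R}^{n\times p}$ have rank $p$, let $P\in\mathbb{R}^{n\times n}$ be symmetric, let $S_K(P)$ be the subspace spanned by the eigenvectors of $P$ associated with its $K$ largest eigenvalues, and let $\mathcal{R}=\mathrm{col}(X)\cap S_K(P)$. Suppose $(\beta,\theta,\alpha)$ and $(\beta',\theta',\alpha')$, with $\beta,\theta,\beta',\theta'\in\mathbb{R}^p$ and $\alpha,\alpha'\in\mathbb{R}^n$, both satisfy $$X\beta+X\theta+\alpha = X\beta'+X\theta'+\alpha' \;(=\mathbb{E}Y)$$ and both satisfy the constraints $X\theta\in\mathcal{R}$, $X\beta\perp\mathcal{R}$, $\alpha\in S_K(P)$, $\alpha\perp\mathcal{R}$ (respectively with primes). Then $\beta=\beta'$, $\theta=\theta'$ and $\alpha=\alpha'$.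
   Context: This is the identifiability statement for the regression model with network effects $\mathbb{E}Y = X\beta+X\theta+\alpha$ subject to the stated constraints; $\mathrm{col}(X)$ denotes the column space of $X$. *)

theory Defs
  imports "HOL-Analysis.Analysis"
begin

definition top_eigenspace :: "real^'n^'n \<Rightarrow> nat \<Rightarrow> (real^'n) set \<Rightarrow> bool" where
  "top_eigenspace P K S \<longleftrightarrow>
     (\<exists>(v :: nat \<Rightarrow> real^'n) (lam :: nat \<Rightarrow> real).
        (\<forall>i<CARD('n). P *v v i = lam i *\<^sub>R v i) \<and>
        (\<forall>i<CARD('n). \<forall>j<CARD('n). v i \<bullet> v j = (if i = j then 1 else 0)) \<and>
        (\<forall>i j. i \<le> j \<and> j < CARD('n) \<longrightarrow> lam j \<le> lam i) \<and>
        S = span (v ` {i. i < K \<and> i < CARD('n)}))"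

definition col :: "real^'p^'n \<Rightarrow> (real^'n) set" where
  "col X = range (\<lambda>b. X *v b)"

end

theory Submission
  imports Defs
begin

text \<open>The differences of the three components of two admissible parametrisations sum to zero.
The \<open>\<theta>\<close>-difference lies in \<open>\<R> = col X \<inter> S\<close> and is orthogonal to the other two, hence
vanishes. The \<open>\<beta>\<close>-difference then equals minus the \<open>\<alpha>\<close>-difference, so it lies in
\<open>col X \<inter> S = \<R>\<close> while being orthogonal to \<open>\<R>\<close>, and vanishes as well. Finally \<open>X\<close> has full
column rank, so \<open>X\<beta>\<close> and \<open>X\<theta>\<close> determine \<open>\<beta>\<close> and \<open>\<theta>\<close>.\<close>

lemma orthogonal_decomposition_zero:
  fixes C S :: "'a::real_inner set"
  assumes "subspace S"
    and "x \<in> C" "y \<in> C \<inter> S" "z \<in> S"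
    and "\<forall>r \<in> C \<inter> S. orthogonal x r" "\<forall>r \<in> C \<inter> S. orthogonal z r"
    and "x + y + z = 0"
  shows "x = 0 \<and> y = 0 \<and> z = 0"
proof -
  have "y = - x - z"
    using \<open>x + y + z = 0\<close> by (simp add: algebra_simps eq_neg_iff_add_eq_0)
  then have "y \<bullet> y = - (x \<bullet> y) - z \<bullet> y"
    by (simp add: inner_diff_left)
  also have "\<dots> = 0"
    using assms(3,5,6) by (simp add: orthogonal_def)
  finally have y: "y = 0" by simp
  with \<open>x + y + z = 0\<close> have "x = - z" by (simp add: eq_neg_iff_add_eq_0)
  with \<open>subspace S\<close> \<open>x \<in> C\<close> \<open>z \<in> S\<close> have "x \<in> C \<inter> S" by (simp add: subspace_neg)
  with assms(5) have "x \<bullet> x = 0" by (simp add: orthogonal_def)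
  then have "x = 0" by simp
  with y \<open>x + y + z = 0\<close> show ?thesis by simp
qed

lemma orthogonal_decomposition_unique:
  fixes C S :: "'a::real_inner set"
  assumes "subspace C" "subspace S"
    and "x \<in> C" "y \<in> C \<inter> S" "z \<in> S"
    and "\<forall>r \<in> C \<inter> S. orthogonal x r" "\<forall>r \<in> C \<inter> S. orthogonal z r"
    and "x' \<in> C" "y' \<in> C \<inter> S" "z' \<in> S"
    and "\<forall>r \<in> C \<inter> S. orthogonal x' r" "\<forall>r \<in> C \<inter> S. orthogonal z' r"
    and "x + y + z = x' + y' + z'"
  shows "x = x' \<and> y = y' \<and> z = z'"
proof -
  have "x - x' = 0 \<and> y - y' = 0 \<and> z - z' = 0"
  proof (rule orthogonal_decomposition_zero[where C = C and S = S])
    show "x - x' \<in> C" "y - y' \<in> C \<inter> S" "z - z' \<in> S"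
      using assms(1-5,8-10) by (auto intro: subspace_diff)
    show "\<forall>r \<in> C \<inter> S. orthogonal (x - x') r" "\<forall>r \<in> C \<inter> S. orthogonal (z - z') r"
      using assms(6,7,11,12) by (simp_all add: orthogonal_def inner_diff_left)
    show "x - x' + (y - y') + (z - z') = 0"
      using assms(13) by (simp add: algebra_simps)
  qed (use assms(2) in simp)
  then show ?thesis by simp
qed

lemma subspace_col: "subspace (col X)"
  unfolding col_def by (simp add: linear_subspace_image subspace_UNIV)

lemma top_eigenspace_subspace:
  assumes "top_eigenspace P K S"
  shows "subspace S"
  using assms unfolding top_eigenspace_def by auto

lemma matrix_vector_mult_cancel_full_rank:
  fixes X :: "real^'p^'n"
  assumes "rank X = CARD('p)" and "X *v b = X *v b'"
  shows "b = b'"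
  using assms full_rank_injective by (auto dest: injD)

theorem proposition1:
  fixes X :: "real^'p^'n" and P :: "real^'n^'n" and K :: nat and S :: "(real^'n) set"
    and \<beta> \<theta> \<beta>' \<theta>' :: "real^'p" and \<alpha> \<alpha>' :: "real^'n"
  assumes rankX: "rank X = CARD('p)"
    and symP: "transpose P = P"
    and SK: "top_eigenspace P K S"
    and eq: "X *v \<beta> + X *v \<theta> + \<alpha> = X *v \<beta>' + X *v \<theta>' + \<alpha>'"
    and c1: "X *v \<theta> \<in> col X \<inter> S"
    and c2: "\<forall>r \<in> col X \<inter> S. orthogonal (X *v \<beta>) r"
    and c3: "\<alpha> \<in> S"
    and c4: "\<forall>r \<in> col X \<inter> S. orthogonal \<alpha> r"
    and c1': "X *v \<theta>' \<in> col X \<inter> S"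
    and c2': "\<forall>r \<in> col X \<inter> S. orthogonal (X *v \<beta>') r"
    and c3': "\<alpha>' \<in> S"
    and c4': "\<forall>r \<in> col X \<inter> S. orthogonal \<alpha>' r"
  shows "\<beta> = \<beta>' \<and> \<theta> = \<theta>' \<and> \<alpha> = \<alpha>'"
proof -
  have col\<beta>: "X *v \<beta> \<in> col X" and col\<beta>': "X *v \<beta>' \<in> col X"
    unfolding col_def by simp_all
  have "X *v \<beta> = X *v \<beta>' \<and> X *v \<theta> = X *v \<theta>' \<and> \<alpha> = \<alpha>'"
    by (rule orthogonal_decomposition_unique[OF subspace_col top_eigenspace_subspace[OF SK]
          col\<beta> c1 c3 c2 c4 col\<beta>' c1' c3' c2' c4' eq])
  then show ?thesis
    using matrix_vector_mult_cancel_full_rank[OF rankX] by blast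
qed

end
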